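(* Let $t\ge0$, $R>1$, let $h$ be a minimizer of $E$ (defined in the context) with $h(1)=h(R)=1$, and let $\alpha,\beta,\gamma\in\mathbb R$. For $v\in H^1_0(1,R)$ define \[ \phi[v]=\int_1^R\left\{\alpha(v')^2+\frac{\beta}{r^2}v^2+\alpha\left(f(h)+\gamma\right)v^2\right\}r^2\,dr, \] where $f(h)=\frac t2(h^2-1)+\frac{3h_+}{2}(h^2-h)$. Then \[ \phi[v]=\int_1^R\left\{\alpha\left(\left(\frac vh\right)'\right)^2h^2+\frac{\beta-6\alpha}{r^2}v^2+\alpha\gamma v^2\right\}r^2\,dr. \]
   Context: $h_+=\frac{3+\sqrt{9+8t}}{4}$; $E[h]=\int_1^R\{\frac12(h')^2+\frac3{r^2}h^2+\frac t8(1-h^2)^2+\frac{h_+}{8}(1+3h^4-4h^3)\}r^2dr$ over $h\in H^1(1,R)$. $H^1_0(1,R)=\{w\in L^2((1,R);dr): w'\in L^2((1,R);r^2dr),\ w(1)=w(R)=0\}$. *)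

theory Defs
  imports "HOL-Analysis.Analysis"
begin

text \<open>A function u
  together with (a representative of) its weak derivative u' is in H^1(a,b) iff
  u' is square integrable on [a,b] and u is the absolutely continuous primitive
  of u'.  On a bounded interval 1 < r < R the weight r^2 is bounded above and
  below, so the weighted space of the paper coincides with this one.\<close>
definition H1 :: "real \<Rightarrow> real \<Rightarrow> (real \<Rightarrow> real) \<Rightarrow> (real \<Rightarrow> real) \<Rightarrow> bool" where
  "H1 a b u u' \<longleftrightarrow>
     set_integrable lborel {a..b} u' \<and>
     set_integrable lborel {a..b} (\<lambda>s. (u' s)\<^sup>2) \<and>
     (\<forall>x\<in>{a..b}. u x = u a + (LBINT s=a..x. u' s))"

definition H10 :: "real \<Rightarrow> (real \<Rightarrow> real) \<Rightarrow> (real \<Rightarrow> real) \<Rightarrow> bool" where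
  "H10 R w w' \<longleftrightarrow> H1 1 R w w' \<and> w 1 = 0 \<and> w R = 0"

definition hplus :: "real \<Rightarrow> real" where
  "hplus t = (3 + sqrt (9 + 8 * t)) / 4"

definition energy :: "real \<Rightarrow> real \<Rightarrow> (real \<Rightarrow> real) \<Rightarrow> (real \<Rightarrow> real) \<Rightarrow> real" where
  "energy t R h h' = (LBINT r=1..R.
      ((1/2) * (h' r)\<^sup>2 + 3 / r\<^sup>2 * (h r)\<^sup>2 + t / 8 * (1 - (h r)\<^sup>2)\<^sup>2
       + hplus t / 8 * (1 + 3 * (h r)^4 - 4 * (h r)^3)) * r\<^sup>2)"

definition fh :: "real \<Rightarrow> real \<Rightarrow> real" where
  "fh t y = t / 2 * (y\<^sup>2 - 1) + 3 * hplus t / 2 * (y\<^sup>2 - y)"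

definition phi :: "real \<Rightarrow> real \<Rightarrow> (real \<Rightarrow> real) \<Rightarrow> real \<Rightarrow> real \<Rightarrow> real
    \<Rightarrow> (real \<Rightarrow> real) \<Rightarrow> (real \<Rightarrow> real) \<Rightarrow> real" where
  "phi t R h \<alpha> \<beta> \<gamma> v v' = (LBINT r=1..R.
      (\<alpha> * (v' r)\<^sup>2 + \<beta> / r\<^sup>2 * (v r)\<^sup>2 + \<alpha> * (fh t (h r) + \<gamma>) * (v r)\<^sup>2) * r\<^sup>2)"

end

theory Submission
  imports Defs
begin

text \<open>Writing \<open>v = q h\<close>, the formula is Picone's identity: the cross terms of
  \<open>\<alpha> (q' h)\<^sup>2 r\<^sup>2\<close> form the exact derivative of \<open>v\<^sup>2 r\<^sup>2 h' / h\<close>, and the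
  Euler-Lagrange equation \<open>(r\<^sup>2 h')' = 6 h + r\<^sup>2 f(h) h\<close> turns what remains into the
  potential \<open>-6 \<alpha> v\<^sup>2\<close>.  The work is to justify this for a minimiser that is a priori only
  in \<open>H\<^sup>1\<close>: the first variation gives the weak Euler-Lagrange equation, du Bois-Reymond's
  lemma upgrades \<open>h\<close> and \<open>r\<^sup>2 h'\<close> to \<open>C\<^sup>1\<close> functions, reflecting a negative
  excursion of \<open>h\<close> would lower the energy, and a Gronwall estimate for the ODE system
  satisfied by \<open>(h, r\<^sup>2 h')\<close> rules out interior zeros.  Hence \<open>h > 0\<close> and \<open>v / h \<in> H\<^sup>1\<close>.\<close>

section \<open>Integrals over compact intervals\<close>

lemma lborel_pair_integrable_triangle:
  fixes F G :: "real \<Rightarrow> real"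
  assumes F[measurable]: "integrable lborel F" and G[measurable]: "integrable lborel G"
  shows "integrable (lborel \<Otimes>\<^sub>M lborel) (\<lambda>(s, \<tau>). F s * (G \<tau> * of_bool (\<tau> \<le> s)))"
proof (rule lborel_pair.Fubini_integrable)
  show "(\<lambda>(s, \<tau>). F s * (G \<tau> * of_bool (\<tau> \<le> s))) \<in> borel_measurable (lborel \<Otimes>\<^sub>M lborel)"
    by measurable
  show "integrable lborel (\<lambda>s. \<integral>\<tau>. norm (case (s, \<tau>) of (s, \<tau>) \<Rightarrow> F s * (G \<tau> * of_bool (\<tau> \<le> s))) \<partial>lborel)"
  proof (rule Bochner_Integration.integrable_bound[where f="\<lambda>s. \<bar>F s\<bar> * (\<integral>\<tau>. \<bar>G \<tau>\<bar> \<partial>lborel)"])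
    show "integrable lborel (\<lambda>s. \<bar>F s\<bar> * (\<integral>\<tau>. \<bar>G \<tau>\<bar> \<partial>lborel))" using F by auto
    show "(\<lambda>s. \<integral>\<tau>. norm (case (s, \<tau>) of (s, \<tau>) \<Rightarrow> F s * (G \<tau> * of_bool (\<tau> \<le> s))) \<partial>lborel)
        \<in> borel_measurable lborel"
      by measurable
    show "AE s in lborel. norm (\<integral>\<tau>. norm (case (s, \<tau>) of (s, \<tau>) \<Rightarrow> F s * (G \<tau> * of_bool (\<tau> \<le> s))) \<partial>lborel)
        \<le> norm (\<bar>F s\<bar> * (\<integral>\<tau>. \<bar>G \<tau>\<bar> \<partial>lborel))"
    proof (rule AE_I2)
      fix s
      have "(\<integral>\<tau>. norm (F s * (G \<tau> * of_bool (\<tau> \<le> s))) \<partial>lborel)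
          = (\<integral>\<tau>. \<bar>F s\<bar> * (\<bar>G \<tau>\<bar> * of_bool (\<tau> \<le> s)) \<partial>lborel)"
        by (intro Bochner_Integration.integral_cong) (auto simp: abs_mult)
      also have "\<dots> = \<bar>F s\<bar> * (\<integral>\<tau>. \<bar>G \<tau>\<bar> * of_bool (\<tau> \<le> s) \<partial>lborel)" by simp
      also have "\<dots> \<le> \<bar>F s\<bar> * (\<integral>\<tau>. \<bar>G \<tau>\<bar> \<partial>lborel)"
      proof (intro mult_left_mono integral_mono)
        show "integrable lborel (\<lambda>\<tau>. \<bar>G \<tau>\<bar> * of_bool (\<tau> \<le> s))"
          by (rule Bochner_Integration.integrable_bound[where f="\<lambda>\<tau>. \<bar>G \<tau>\<bar>"]) (use G in auto)
      qed (use G in auto)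
      finally show "norm (\<integral>\<tau>. norm (case (s, \<tau>) of (s, \<tau>) \<Rightarrow> F s * (G \<tau> * of_bool (\<tau> \<le> s))) \<partial>lborel)
          \<le> norm (\<bar>F s\<bar> * (\<integral>\<tau>. \<bar>G \<tau>\<bar> \<partial>lborel))"
        by (simp add: integral_nonneg_AE)
    qed
  qed
  show "AE s in lborel. integrable lborel (\<lambda>\<tau>. case (s, \<tau>) of (s, \<tau>) \<Rightarrow> F s * (G \<tau> * of_bool (\<tau> \<le> s)))"
  proof (rule AE_I2)
    fix s show "integrable lborel (\<lambda>\<tau>. case (s, \<tau>) of (s, \<tau>) \<Rightarrow> F s * (G \<tau> * of_bool (\<tau> \<le> s)))"
      by (rule Bochner_Integration.integrable_bound[where f="\<lambda>\<tau>. \<bar>F s\<bar> * \<bar>G \<tau>\<bar>"])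
        (use G in \<open>auto simp: abs_mult\<close>)
  qed
qed

lemma lborel_integral_triangle_swap:
  fixes F G :: "real \<Rightarrow> real"
  assumes "integrable lborel F" and "integrable lborel G"
  shows "(\<integral>s. F s * (\<integral>\<tau>. G \<tau> * of_bool (\<tau> \<le> s) \<partial>lborel) \<partial>lborel)
       = (\<integral>\<tau>. G \<tau> * (\<integral>s. F s * of_bool (\<tau> \<le> s) \<partial>lborel) \<partial>lborel)"
proof -
  have "(\<integral>\<tau>. (\<integral>s. F s * (G \<tau> * of_bool (\<tau> \<le> s)) \<partial>lborel) \<partial>lborel)
      = (\<integral>s. (\<integral>\<tau>. F s * (G \<tau> * of_bool (\<tau> \<le> s)) \<partial>lborel) \<partial>lborel)"
    using lborel_pair.Fubini_integral[OF lborel_pair_integrable_triangle[OF assms]] by simp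
  moreover have "(\<lambda>\<tau>. \<integral>s. F s * (G \<tau> * of_bool (\<tau> \<le> s)) \<partial>lborel)
      = (\<lambda>\<tau>. G \<tau> * (\<integral>s. F s * of_bool (\<tau> \<le> s) \<partial>lborel))"
    by (auto simp: mult.left_commute[of "F _"] intro!: ext)
  ultimately show ?thesis by simp
qed

lemma continuous_on_Icc_bound:
  fixes g :: "real \<Rightarrow> real"
  assumes "continuous_on {a..b} g"
  obtains B where "B > 0" "\<And>x. x \<in> {a..b} \<Longrightarrow> \<bar>g x\<bar> \<le> B"
proof -
  have "bounded (g ` {a..b})"
    by (rule compact_imp_bounded[OF compact_continuous_image[OF assms compact_Icc]])
  then show ?thesis using that by (force simp: bounded_pos)
qed

lemma set_borel_measurable_mult:
  fixes f g :: "'a \<Rightarrow> real"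
  assumes "set_borel_measurable M A f" "set_borel_measurable M A g"
  shows "set_borel_measurable M A (\<lambda>x. f x * g x)"
proof -
  have "(\<lambda>x. (indicator A x *\<^sub>R f x) * (indicator A x *\<^sub>R g x)) \<in> borel_measurable M"
    using assms unfolding set_borel_measurable_def by measurable
  moreover have "(\<lambda>x. (indicator A x *\<^sub>R f x) * (indicator A x *\<^sub>R g x)) = (\<lambda>x. indicator A x *\<^sub>R (f x * g x))"
    by (auto simp: indicator_def)
  ultimately show ?thesis unfolding set_borel_measurable_def by simp
qed

lemma set_borel_measurable_if_set_integrable:
  fixes f :: "'a \<Rightarrow> real"
  shows "set_integrable M A f \<Longrightarrow> set_borel_measurable M A f"
  unfolding set_integrable_def set_borel_measurable_def by auto

lemma set_borel_measurable_continuous_on_Icc: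
  fixes g :: "real \<Rightarrow> real"
  shows "continuous_on {a..b} g \<Longrightarrow> set_borel_measurable lborel {a..b} g"
  using set_measurable_continuous_on[of "{a..b}" g] unfolding set_borel_measurable_def by auto

lemma set_integrable_mult_continuous:
  fixes f g :: "real \<Rightarrow> real"
  assumes f: "set_integrable lborel {a..b} f" and g: "continuous_on {a..b} g"
  shows "set_integrable lborel {a..b} (\<lambda>x. f x * g x)"
proof -
  obtain B where "B > 0" and B: "\<And>x. x \<in> {a..b} \<Longrightarrow> \<bar>g x\<bar> \<le> B"
    using continuous_on_Icc_bound[OF g] by blast
  show ?thesis
  proof (rule set_integrable_bound[where f="\<lambda>x. B * f x"])
    show "set_integrable lborel {a..b} (\<lambda>x. B * f x)" using f by simp
    show "set_borel_measurable lborel {a..b} (\<lambda>x. f x * g x)"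
      by (rule set_borel_measurable_mult[OF set_borel_measurable_if_set_integrable[OF f]
            set_borel_measurable_continuous_on_Icc[OF g]])
    show "AE x in lborel. x \<in> {a..b} \<longrightarrow> norm (f x * g x) \<le> norm (B * f x)"
    proof (intro AE_I2 impI)
      fix x assume "x \<in> {a..b}"
      then have "\<bar>f x\<bar> * \<bar>g x\<bar> \<le> \<bar>f x\<bar> * B" using B by (simp add: mult_left_mono)
      then show "norm (f x * g x) \<le> norm (B * f x)" using \<open>B > 0\<close> by (simp add: abs_mult mult.commute)
    qed
  qed
qed

lemma set_integrable_mult_continuous_add:
  fixes f c d :: "real \<Rightarrow> real"
  assumes "set_integrable lborel {a..b} f" "continuous_on {a..b} c" "continuous_on {a..b} d"
  shows "set_integrable lborel {a..b} (\<lambda>r. f r * c r + d r)"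
  using set_integrable_mult_continuous[OF assms(1,2)] borel_integrable_atLeastAtMost'[OF assms(3)]
  by (rule set_integral_add)

lemma set_integrable_mult_L2:
  fixes f g :: "'a \<Rightarrow> real"
  assumes f: "set_integrable M A f" and g: "set_integrable M A g"
    and f2: "set_integrable M A (\<lambda>x. (f x)\<^sup>2)" and g2: "set_integrable M A (\<lambda>x. (g x)\<^sup>2)"
  shows "set_integrable M A (\<lambda>x. f x * g x)"
proof (rule set_integrable_bound[where f="\<lambda>x. (f x)\<^sup>2 + (g x)\<^sup>2"])
  show "set_integrable M A (\<lambda>x. (f x)\<^sup>2 + (g x)\<^sup>2)" using f2 g2 by (rule set_integral_add)
  show "set_borel_measurable M A (\<lambda>x. f x * g x)"
    by (rule set_borel_measurable_mult[OF set_borel_measurable_if_set_integrable[OF f]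
          set_borel_measurable_if_set_integrable[OF g]])
  show "AE x in M. x \<in> A \<longrightarrow> norm (f x * g x) \<le> norm ((f x)\<^sup>2 + (g x)\<^sup>2)"
  proof (intro AE_I2 impI)
    fix x
    have "2 * \<bar>f x\<bar> * \<bar>g x\<bar> \<le> (f x)\<^sup>2 + (g x)\<^sup>2"
      using sum_squares_bound[of "\<bar>f x\<bar>" "\<bar>g x\<bar>"] by simp
    moreover have "0 \<le> \<bar>f x\<bar> * \<bar>g x\<bar>" by simp
    ultimately have "\<bar>f x\<bar> * \<bar>g x\<bar> \<le> (f x)\<^sup>2 + (g x)\<^sup>2" by linarith
    then show "norm (f x * g x) \<le> norm ((f x)\<^sup>2 + (g x)\<^sup>2)" by (simp add: abs_mult)
  qed
qed

lemma set_integral_cong_Icc: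
  fixes f g :: "real \<Rightarrow> real"
  assumes "\<And>x. x \<in> {a..b} \<Longrightarrow> f x = g x"
  shows "(LINT x:{a..b}|lborel. f x) = (LINT x:{a..b}|lborel. g x)"
  by (rule set_lebesgue_integral_cong) (use assms in auto)

lemma set_integral_cong_AE_set_borel:
  fixes f g :: "real \<Rightarrow> real"
  assumes "set_borel_measurable lborel A f" "set_borel_measurable lborel A g"
    and "AE x in lborel. x \<in> A \<longrightarrow> f x = g x"
  shows "(LINT x:A|lborel. f x) = (LINT x:A|lborel. g x)"
  unfolding set_lebesgue_integral_def
  using assms unfolding set_borel_measurable_def
  by (intro integral_cong_AE) (auto elim!: eventually_mono simp: indicator_def)

lemma set_integral_indicator_mult:
  fixes f :: "real \<Rightarrow> real"
  shows "(LINT s:A|lborel. indicator B s * f s) = (LINT s:(A \<inter> B)|lborel. f s)"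
  unfolding set_lebesgue_integral_def by (simp add: indicator_inter_arith mult.assoc)

lemma set_integrable_indicator_mult_iff:
  fixes f :: "real \<Rightarrow> real"
  shows "set_integrable lborel A (\<lambda>s. indicator B s * f s) \<longleftrightarrow> set_integrable lborel (A \<inter> B) f"
  unfolding set_integrable_def by (simp add: indicator_inter_arith mult.assoc)

lemma set_integral_as_integral_indicator:
  fixes f :: "real \<Rightarrow> real"
  shows "(LINT s:A|lborel. f s) = (\<integral>s. f s * indicator A s \<partial>lborel)"
  unfolding set_lebesgue_integral_def by (simp add: mult.commute)

lemma set_integral_Icc_split:
  fixes f :: "real \<Rightarrow> real"
  assumes f: "set_integrable lborel {a..c} f" and ab: "a \<le> b" and bc: "b \<le> c"
  shows "(LINT s:{a..c}|lborel. f s) = (LINT s:{a..b}|lborel. f s) + (LINT s:{b..c}|lborel. f s)"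
proof -
  have e: "{a..c} = {a..b} \<union> {b<..c}" using ab bc by auto
  have i1: "set_integrable lborel {a..b} f" by (rule set_integrable_subset[OF f]) (use bc in auto)
  have i2: "set_integrable lborel {b<..c} f" by (rule set_integrable_subset[OF f]) (use ab in auto)
  have "(LINT s:{a..c}|lborel. f s) = (LINT s:{a..b}|lborel. f s) + (LINT s:{b<..c}|lborel. f s)"
    unfolding e by (rule set_integral_Un[OF _ i1 i2]) auto
  moreover have "(LINT s:{b<..c}|lborel. f s) = (LINT s:{b..c}|lborel. f s)"
    using interval_integral_Ioc[of b c f] interval_integral_Icc[of b c f] bc by simp
  ultimately show ?thesis by simp
qed

lemma set_integral_Icc_neg:
  fixes f :: "real \<Rightarrow> real"
  assumes ab: "a < b" and f: "continuous_on {a..b} f" and neg: "\<And>x. a < x \<Longrightarrow> x < b \<Longrightarrow> f x < 0"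
  shows "(LINT x:{a..b}|lborel. f x) < 0"
proof -
  have "integral (cbox a b) f < integral (cbox a b) (\<lambda>_. 0)"
    by (rule integral_less) (use ab f neg in auto)
  then show ?thesis
    using set_borel_integral_eq_integral(2)[OF borel_integrable_atLeastAtMost'[OF f]] by simp
qed

lemma set_integral_Icc_eq_0_imp_AE:
  fixes f :: "real \<Rightarrow> real"
  assumes "set_integrable lborel {a..b} (\<lambda>x. (f x)\<^sup>2)" "(LINT x:{a..b}|lborel. (f x)\<^sup>2) = 0"
  shows "AE x in lborel. x \<in> {a..b} \<longrightarrow> f x = 0"
proof -
  have "AE x in lborel. indicator {a..b} x * (f x)\<^sup>2 = (0::real)"
  proof (subst integral_nonneg_eq_0_iff_AE[symmetric])
    show "integrable lborel (\<lambda>x. indicator {a..b} x * (f x)\<^sup>2)"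
      using assms(1) unfolding set_integrable_def by simp
    show "integral\<^sup>L lborel (\<lambda>x. indicator {a..b} x * (f x)\<^sup>2) = 0"
      using assms(2) unfolding set_lebesgue_integral_def by simp
  qed auto
  then show ?thesis by eventually_elim (auto simp: indicator_def)
qed

section \<open>Sobolev functions on an interval\<close>

lemma H1_set_integrable:
  assumes "H1 a b u u'" "{c..d} \<subseteq> {a..b}"
  shows "set_integrable lborel {c..d} u'"
  by (rule set_integrable_subset[of lborel "{a..b}"]) (use assms in \<open>auto simp: H1_def\<close>)

lemma H1_set_integrable_square:
  assumes "H1 a b u u'" "{c..d} \<subseteq> {a..b}"
  shows "set_integrable lborel {c..d} (\<lambda>s. (u' s)\<^sup>2)"
  by (rule set_integrable_subset[of lborel "{a..b}"]) (use assms in \<open>auto simp: H1_def\<close>)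

lemma H1_eq_set_integral:
  assumes "H1 a b u u'" "x \<in> {a..b}"
  shows "u x = u a + (LINT s:{a..x}|lborel. u' s)"
proof -
  have "u x = u a + (LBINT s=a..x. u' s)" using assms unfolding H1_def by blast
  then show ?thesis using assms(2) by (simp add: interval_integral_Icc)
qed

lemma H1_diff_eq_set_integral:
  assumes "H1 a b u u'" "x \<in> {a..b}" "y \<in> {a..b}" "x \<le> y"
  shows "u y - u x = (LINT s:{x..y}|lborel. u' s)"
proof -
  have "(LINT s:{a..y}|lborel. u' s) = (LINT s:{a..x}|lborel. u' s) + (LINT s:{x..y}|lborel. u' s)"
    by (rule set_integral_Icc_split[OF H1_set_integrable[OF assms(1)]]) (use assms in auto)
  then show ?thesis using H1_eq_set_integral[OF assms(1,2)] H1_eq_set_integral[OF assms(1,3)] by simp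
qed

lemma H1_continuous_on:
  assumes "H1 a b u u'"
  shows "continuous_on {a..b} u"
proof -
  have i: "set_integrable lborel {a..b} u'" using assms unfolding H1_def by blast
  have "continuous_on {a..b} (\<lambda>x. u a + integral {a..x} u')"
    by (intro continuous_intros indefinite_integral_continuous_1 set_borel_integral_eq_integral(1)[OF i])
  moreover have "u x = u a + integral {a..x} u'" if "x \<in> {a..b}" for x
  proof -
    have "set_integrable lborel {a..x} u'" using H1_set_integrable[OF assms] that by auto
    then show ?thesis using H1_eq_set_integral[OF assms that] set_borel_integral_eq_integral(2) by metis
  qed
  ultimately show ?thesis using continuous_on_eq by (metis (no_types, lifting))
qed

lemma H1_if_continuous_derivative:
  fixes w w' :: "real \<Rightarrow> real"
  assumes ab: "a \<le> b" and c: "continuous_on {a..b} w'"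
    and d: "\<And>x. x \<in> {a..b} \<Longrightarrow> (w has_real_derivative w' x) (at x within {a..b})"
  shows "H1 a b w w'"
  unfolding H1_def
proof (intro conjI ballI)
  show "set_integrable lborel {a..b} w'" by (rule borel_integrable_atLeastAtMost'[OF c])
  show "set_integrable lborel {a..b} (\<lambda>s. (w' s)\<^sup>2)"
    by (rule borel_integrable_atLeastAtMost') (intro continuous_intros c)
  fix x assume x: "x \<in> {a..b}"
  have "(LBINT s=a..x. w' s) = w x - w a"
  proof (rule interval_integral_FTC_finite)
    show "continuous_on {min a x..max a x} w'"
      using x by (auto intro: continuous_on_subset[OF c])
    fix y assume "min a x \<le> y" "y \<le> max a x"
    then have "y \<in> {a..b}" "{min a x..max a x} \<subseteq> {a..b}" using x by auto
    then have "(w has_real_derivative w' y) (at y within {min a x..max a x})"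
      using d has_field_derivative_subset by blast
    then show "(w has_vector_derivative w' y) (at y within {min a x..max a x})"
      by (simp add: has_real_derivative_iff_has_vector_derivative)
  qed
  then show "w x = w a + (LBINT s=a..x. w' s)" by simp
qed

lemma H1_has_real_derivative:
  fixes u p :: "real \<Rightarrow> real"
  assumes u: "H1 a b u p" and c: "continuous_on {a..b} p" and x: "x \<in> {a..b}"
  shows "(u has_real_derivative p x) (at x within {a..b})"
proof -
  have "((\<lambda>y. LBINT s=a..y. p s) has_vector_derivative p x) (at x within {a..b})"
    using interval_integral_FTC2[of a a b p x] c x by auto
  then have d: "((\<lambda>y. u a + (LBINT s=a..y. p s)) has_vector_derivative p x) (at x within {a..b})"
    by (auto intro!: derivative_eq_intros)
  have "(u has_vector_derivative p x) (at x within {a..b})"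
  proof (rule has_vector_derivative_transform[OF x _ d])
    fix y assume "y \<in> {a..b}"
    then show "u y = u a + (LBINT s=a..y. p s)" using u unfolding H1_def by blast
  qed
  then show ?thesis by (simp add: has_real_derivative_iff_has_vector_derivative)
qed

lemma H1_primitive:
  fixes f :: "real \<Rightarrow> real"
  assumes "continuous_on {a..b} f"
  shows "H1 a b (\<lambda>x. LBINT s=a..x. f s) f"
  unfolding H1_def using assms by (auto intro!: borel_integrable_atLeastAtMost' continuous_intros)

lemma H1_cong_AE:
  fixes u u' p :: "real \<Rightarrow> real"
  assumes u: "H1 a b u u'" and c: "continuous_on {a..b} p"
    and ae: "AE x in lborel. x \<in> {a..b} \<longrightarrow> u' x = p x"
  shows "H1 a b u p"
  unfolding H1_def
proof (intro conjI ballI)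
  show "set_integrable lborel {a..b} p" by (rule borel_integrable_atLeastAtMost'[OF c])
  show "set_integrable lborel {a..b} (\<lambda>s. (p s)\<^sup>2)"
    by (rule borel_integrable_atLeastAtMost') (intro continuous_intros c)
  fix x assume x: "x \<in> {a..b}"
  have sub: "{a..x} \<subseteq> {a..b}" using x by auto
  have "(LINT s:{a..x}|lborel. u' s) = (LINT s:{a..x}|lborel. p s)"
  proof (rule set_integral_cong_AE_set_borel)
    show "set_borel_measurable lborel {a..x} u'"
      by (rule set_borel_measurable_if_set_integrable[OF H1_set_integrable[OF u sub]])
    show "set_borel_measurable lborel {a..x} p"
      by (rule set_borel_measurable_continuous_on_Icc[OF continuous_on_subset[OF c sub]])
    show "AE s in lborel. s \<in> {a..x} \<longrightarrow> u' s = p s"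
      using ae by eventually_elim (use sub in auto)
  qed
  then show "u x = u a + (LBINT s=a..x. p s)"
    using H1_eq_set_integral[OF u x] x by (simp add: interval_integral_Icc)
qed

lemma H1_product_set_integrable:
  assumes u: "H1 a b u u'" and w: "H1 a b w w'" and sub: "{c..d} \<subseteq> {a..b}"
  shows "set_integrable lborel {c..d} (\<lambda>s. u' s * w s + u s * w' s)"
proof (rule set_integral_add)
  show "set_integrable lborel {c..d} (\<lambda>s. u' s * w s)"
    by (rule set_integrable_mult_continuous[OF H1_set_integrable[OF u sub]
          continuous_on_subset[OF H1_continuous_on[OF w] sub]])
  show "set_integrable lborel {c..d} (\<lambda>s. u s * w' s)"
    using set_integrable_mult_continuous[OF H1_set_integrable[OF w sub]
        continuous_on_subset[OF H1_continuous_on[OF u] sub]]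
    by (simp add: mult.commute)
qed

text \<open>Both sides are the integral of \<open>u' s * w' \<tau>\<close> over the triangle \<open>a \<le> \<tau> \<le> s \<le> x\<close>.\<close>
lemma H1_set_integral_triangle_swap:
  assumes u: "H1 a b u u'" and w: "H1 a b w w'" and x: "x \<in> {a..b}"
  shows "(LINT s:{a..x}|lborel. u' s * (w s - w a)) = (LINT s:{a..x}|lborel. w' s * (u x - u s))"
proof -
  have sub: "{a..x} \<subseteq> {a..b}" using x by auto
  define F where "F = (\<lambda>s. u' s * indicator {a..x} s)"
  define G where "G = (\<lambda>s. w' s * indicator {a..x} s)"
  have F: "integrable lborel F"
    using H1_set_integrable[OF u sub] unfolding F_def set_integrable_def by (simp add: mult.commute)
  have G: "integrable lborel G"
    using H1_set_integrable[OF w sub] unfolding G_def set_integrable_def by (simp add: mult.commute)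
  have inner_G: "(\<integral>\<tau>. G \<tau> * of_bool (\<tau> \<le> s) \<partial>lborel) = w s - w a" if "s \<in> {a..x}" for s
  proof -
    have "(\<integral>\<tau>. G \<tau> * of_bool (\<tau> \<le> s) \<partial>lborel) = (LINT \<tau>:{a..s}|lborel. w' \<tau>)"
      unfolding set_integral_as_integral_indicator G_def using that
      by (intro Bochner_Integration.integral_cong) (auto simp: indicator_def)
    then show ?thesis using H1_eq_set_integral[OF w, of s] that x by simp
  qed
  have inner_F: "(\<integral>s. F s * of_bool (\<tau> \<le> s) \<partial>lborel) = u x - u \<tau>" if "\<tau> \<in> {a..x}" for \<tau>
  proof -
    have "(\<integral>s. F s * of_bool (\<tau> \<le> s) \<partial>lborel) = (LINT s:{\<tau>..x}|lborel. u' s)"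
      unfolding set_integral_as_integral_indicator F_def using that
      by (intro Bochner_Integration.integral_cong) (auto simp: indicator_def)
    then show ?thesis using H1_diff_eq_set_integral[OF u _ x, of \<tau>] that x by simp
  qed
  have "(\<integral>s. F s * (\<integral>\<tau>. G \<tau> * of_bool (\<tau> \<le> s) \<partial>lborel) \<partial>lborel)
      = (LINT s:{a..x}|lborel. u' s * (w s - w a))"
    unfolding set_integral_as_integral_indicator F_def
    by (intro Bochner_Integration.integral_cong) (auto simp: inner_G indicator_def)
  moreover have "(\<integral>\<tau>. G \<tau> * (\<integral>s. F s * of_bool (\<tau> \<le> s) \<partial>lborel) \<partial>lborel)
      = (LINT s:{a..x}|lborel. w' s * (u x - u s))"
    unfolding set_integral_as_integral_indicator G_def
    by (intro Bochner_Integration.integral_cong) (auto simp: inner_F indicator_def)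
  ultimately show ?thesis using lborel_integral_triangle_swap[OF F G] by simp
qed

lemma H1_product_rule:
  assumes u: "H1 a b u u'" and w: "H1 a b w w'" and x: "x \<in> {a..b}"
  shows "u x * w x = u a * w a + (LINT s:{a..x}|lborel. u' s * w s + u s * w' s)"
proof -
  have sub: "{a..x} \<subseteq> {a..b}" using x by auto
  have iu: "set_integrable lborel {a..x} u'" using H1_set_integrable[OF u sub] .
  have iw: "set_integrable lborel {a..x} w'" using H1_set_integrable[OF w sub] .
  have i1: "set_integrable lborel {a..x} (\<lambda>s. u' s * w s)"
    by (rule set_integrable_mult_continuous[OF iu continuous_on_subset[OF H1_continuous_on[OF w] sub]])
  have i2: "set_integrable lborel {a..x} (\<lambda>s. u s * w' s)"
    using set_integrable_mult_continuous[OF iw continuous_on_subset[OF H1_continuous_on[OF u] sub]]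
    by (simp add: mult.commute)
  have "(LINT s:{a..x}|lborel. u' s * (w s - w a)) = (LINT s:{a..x}|lborel. u' s * w s) - w a * (LINT s:{a..x}|lborel. u' s)"
    using i1 iu by (simp add: right_diff_distrib set_integral_diff mult.commute)
  moreover have "(LINT s:{a..x}|lborel. w' s * (u x - u s)) = u x * (LINT s:{a..x}|lborel. w' s) - (LINT s:{a..x}|lborel. u s * w' s)"
    using i2 iw by (simp add: right_diff_distrib set_integral_diff mult.commute)
  moreover have "(LINT s:{a..x}|lborel. u' s * w s + u s * w' s) = (LINT s:{a..x}|lborel. u' s * w s) + (LINT s:{a..x}|lborel. u s * w' s)"
    using i1 i2 by (rule set_integral_add)
  ultimately show ?thesis
    using H1_set_integral_triangle_swap[OF u w x] H1_eq_set_integral[OF u x] H1_eq_set_integral[OF w x]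
    by (simp add: algebra_simps)
qed

lemma H1_mult:
  assumes u: "H1 a b u u'" and w: "H1 a b w w'"
  shows "H1 a b (\<lambda>x. u x * w x) (\<lambda>s. u' s * w s + u s * w' s)"
  unfolding H1_def
proof (intro conjI ballI)
  show i: "set_integrable lborel {a..b} (\<lambda>s. u' s * w s + u s * w' s)"
    by (rule H1_product_set_integrable[OF u w order_refl])
  have i1: "set_integrable lborel {a..b} (\<lambda>s. (u' s)\<^sup>2 * (w s)\<^sup>2)"
    by (rule set_integrable_mult_continuous[OF H1_set_integrable_square[OF u]])
      (auto intro: continuous_intros H1_continuous_on[OF w])
  have i2: "set_integrable lborel {a..b} (\<lambda>s. (w' s)\<^sup>2 * (u s)\<^sup>2)"
    by (rule set_integrable_mult_continuous[OF H1_set_integrable_square[OF w]])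
      (auto intro: continuous_intros H1_continuous_on[OF u])
  show "set_integrable lborel {a..b} (\<lambda>s. (u' s * w s + u s * w' s)\<^sup>2)"
  proof (rule set_integrable_bound[where f="\<lambda>s. 2 * ((u' s)\<^sup>2 * (w s)\<^sup>2) + 2 * ((w' s)\<^sup>2 * (u s)\<^sup>2)"])
    show "set_integrable lborel {a..b} (\<lambda>s. 2 * ((u' s)\<^sup>2 * (w s)\<^sup>2) + 2 * ((w' s)\<^sup>2 * (u s)\<^sup>2))"
      using i1 i2 by (intro set_integral_add set_integrable_mult_right)
    show "set_borel_measurable lborel {a..b} (\<lambda>s. (u' s * w s + u s * w' s)\<^sup>2)"
      using set_borel_measurable_mult[OF set_borel_measurable_if_set_integrable[OF i]
          set_borel_measurable_if_set_integrable[OF i]]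
      by (simp add: power2_eq_square)
    show "AE x in lborel. x \<in> {a..b} \<longrightarrow> norm ((u' x * w x + u x * w' x)\<^sup>2)
        \<le> norm (2 * ((u' x)\<^sup>2 * (w x)\<^sup>2) + 2 * ((w' x)\<^sup>2 * (u x)\<^sup>2))"
    proof (intro AE_I2 impI)
      fix x
      define A B where "A = u' x * w x" and "B = u x * w' x"
      have "(A + B)\<^sup>2 \<le> 2 * A\<^sup>2 + 2 * B\<^sup>2" using sum_squares_bound[of A B] by (simp add: power2_sum)
      then show "norm ((u' x * w x + u x * w' x)\<^sup>2) \<le> norm (2 * ((u' x)\<^sup>2 * (w x)\<^sup>2) + 2 * ((w' x)\<^sup>2 * (u x)\<^sup>2))"
        unfolding A_def B_def by (simp add: power_mult_distrib mult.commute)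
    qed
  qed
  fix x assume x: "x \<in> {a..b}"
  from H1_product_rule[OF u w x] show "u x * w x = u a * w a + (LBINT s=a..x. u' s * w s + u s * w' s)"
    using x by (simp add: interval_integral_Icc)
qed

lemma H1_add_scaled:
  assumes u: "H1 a b u u'" and w: "H1 a b w w'"
  shows "H1 a b (\<lambda>x. u x + c * w x) (\<lambda>s. u' s + c * w' s)"
  unfolding H1_def
proof (intro conjI ballI)
  have iu: "set_integrable lborel {a..b} u'" and iw: "set_integrable lborel {a..b} w'"
    and iu2: "set_integrable lborel {a..b} (\<lambda>s. (u' s)\<^sup>2)" and iw2: "set_integrable lborel {a..b} (\<lambda>s. (w' s)\<^sup>2)"
    using u w unfolding H1_def by auto
  have iuw: "set_integrable lborel {a..b} (\<lambda>s. u' s * w' s)" by (rule set_integrable_mult_L2[OF iu iw iu2 iw2])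
  show "set_integrable lborel {a..b} (\<lambda>s. u' s + c * w' s)"
    using iu iw by (intro set_integral_add) auto
  have "set_integrable lborel {a..b} (\<lambda>s. (u' s)\<^sup>2 + (2 * c * (u' s * w' s) + c\<^sup>2 * (w' s)\<^sup>2))"
    using iu2 iuw iw2 by (intro set_integral_add) auto
  then show "set_integrable lborel {a..b} (\<lambda>s. (u' s + c * w' s)\<^sup>2)"
    by (simp add: power2_eq_square algebra_simps)
  fix x assume x: "x \<in> {a..b}"
  have sub: "{a..x} \<subseteq> {a..b}" using x by auto
  have "(LINT s:{a..x}|lborel. u' s + c * w' s) = (LINT s:{a..x}|lborel. u' s) + c * (LINT s:{a..x}|lborel. w' s)"
    using H1_set_integrable[OF u sub] H1_set_integrable[OF w sub] by (subst set_integral_add) auto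
  then show "u x + c * w x = u a + c * w a + (LBINT s=a..x. u' s + c * w' s)"
    using H1_eq_set_integral[OF u x] H1_eq_set_integral[OF w x] x
    by (simp add: interval_integral_Icc algebra_simps)
qed

lemma H1_divide:

  fixes v v' h p :: "real \<Rightarrow> real"
  assumes ab: "a \<le> b" and v: "H1 a b v v'" and cp: "continuous_on {a..b} p"
    and dh: "\<And>x. x \<in> {a..b} \<Longrightarrow> (h has_real_derivative p x) (at x within {a..b})"
    and h0: "\<And>x. x \<in> {a..b} \<Longrightarrow> h x \<noteq> 0"
  shows "H1 a b (\<lambda>x. v x / h x) (\<lambda>x. v' x / h x - v x * p x / (h x)\<^sup>2)"
proof -
  have ch: "continuous_on {a..b} h" by (rule DERIV_continuous_on[OF dh])
  have "H1 a b (\<lambda>x. inverse (h x)) (\<lambda>x. - (p x * inverse (h x ^ Suc (Suc 0))))"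
  proof (rule H1_if_continuous_derivative[OF ab])
    show "continuous_on {a..b} (\<lambda>x. - (p x * inverse (h x ^ Suc (Suc 0))))"
      using h0 by (intro continuous_intros cp ch) auto
    show "((\<lambda>x. inverse (h x)) has_real_derivative - (p x * inverse (h x ^ Suc (Suc 0)))) (at x within {a..b})"
      if "x \<in> {a..b}" for x
      by (rule DERIV_inverse_fun[OF dh[OF that] h0[OF that]])
  qed
  from H1_mult[OF v this] show ?thesis
    by (simp add: divide_inverse power2_eq_square mult.assoc)
qed

lemma last_zero_before:
  fixes h :: "real \<Rightarrow> real"
  assumes c: "continuous_on {l..x} h" and hl: "h l > 0" and hx: "h x < 0" and lx: "l \<le> x"
  obtains a where "l < a" "a < x" "h a = 0" "\<And>s. a < s \<Longrightarrow> s \<le> x \<Longrightarrow> h s < 0"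
proof -
  define S where "S = {l..x} \<inter> h -` {0}"
  have ne: "S \<noteq> {}"
  proof -
    obtain y where "l \<le> y" "y \<le> x" "h y = 0" using IVT2'[of h x 0 l] c hl hx lx by force
    then show ?thesis unfolding S_def by auto
  qed
  have cl: "closed S" unfolding S_def by (rule continuous_closed_preimage[OF c]) auto
  have bdd: "bdd_above S" unfolding S_def by (rule bdd_aboveI[where M=x]) auto
  define a where "a = Sup S"
  have "a \<in> S" unfolding a_def using closed_contains_Sup[OF ne bdd cl] .
  then have a: "l \<le> a" "a \<le> x" "h a = 0" unfolding S_def by auto
  have "h s < 0" if s: "a < s" "s \<le> x" for s
  proof (rule ccontr)
    assume "\<not> h s < 0"
    moreover have "continuous_on {s..x} h" by (rule continuous_on_subset[OF c]) (use s a in auto)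
    ultimately obtain y where y: "s \<le> y" "y \<le> x" "h y = 0" using IVT2'[of h x 0 s] s hx by force
    then have "y \<in> S" unfolding S_def using s a by auto
    then have "y \<le> a" unfolding a_def by (rule cSup_upper[OF _ bdd])
    then show False using y s by auto
  qed
  moreover have "a \<noteq> l" "a \<noteq> x" using a hl hx by auto
  ultimately show ?thesis using a that by force
qed

lemma first_zero_after:
  fixes h :: "real \<Rightarrow> real"
  assumes c: "continuous_on {x..u} h" and hu: "h u > 0" and hx: "h x < 0" and xu: "x \<le> u"
  obtains b where "x < b" "b < u" "h b = 0" "\<And>s. x \<le> s \<Longrightarrow> s < b \<Longrightarrow> h s < 0"
proof -
  define S where "S = {x..u} \<inter> h -` {0}"
  have ne: "S \<noteq> {}"
  proof -
    obtain y where "x \<le> y" "y \<le> u" "h y = 0" using IVT'[of h x 0 u] c hu hx xu by force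
    then show ?thesis unfolding S_def by auto
  qed
  have cl: "closed S" unfolding S_def by (rule continuous_closed_preimage[OF c]) auto
  have bdd: "bdd_below S" unfolding S_def by (rule bdd_belowI[where m=x]) auto
  define b where "b = Inf S"
  have "b \<in> S" unfolding b_def using closed_contains_Inf[OF ne bdd cl] .
  then have b: "x \<le> b" "b \<le> u" "h b = 0" unfolding S_def by auto
  have "h s < 0" if s: "x \<le> s" "s < b" for s
  proof (rule ccontr)
    assume "\<not> h s < 0"
    moreover have "continuous_on {x..s} h" by (rule continuous_on_subset[OF c]) (use s b in auto)
    ultimately obtain y where y: "x \<le> y" "y \<le> s" "h y = 0" using IVT'[of h x 0 s] s hx by force
    then have "y \<in> S" unfolding S_def using s b by auto
    then have "b \<le> y" unfolding b_def by (rule cInf_lower[OF _ bdd])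
    then show False using y s by auto
  qed
  moreover have "b \<noteq> u" "b \<noteq> x" using b hu hx by auto
  ultimately show ?thesis using b that by force
qed

lemma H1_set_integral_between_zeros:
  assumes Hp: "H1 l u h p" and ab: "l < a" "a \<le> b" "b \<le> u" and ha: "h a = 0" and hb: "h b = 0"
    and x: "x \<in> {l..u}"
  shows "(LINT s:({l..x} \<inter> {a..b})|lborel. p s) = (if x < a then 0 else if x \<le> b then h x else 0)"
proof (cases "x < a")
  case True
  then have "{l..x} \<inter> {a..b} = {}" by auto
  then show ?thesis using True by (simp add: set_lebesgue_integral_def)
next
  case False
  show ?thesis
  proof (cases "x \<le> b")
    case True
    then have "{l..x} \<inter> {a..b} = {a..x}" using False ab by auto
    then show ?thesis
      using H1_diff_eq_set_integral[OF Hp, of a x] x ab False True ha by simp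
  next
    case beyond: False
    then have "{l..x} \<inter> {a..b} = {a..b}" using ab by auto
    then show ?thesis
      using H1_diff_eq_set_integral[OF Hp, of a b] x ab False beyond ha hb by simp
  qed
qed

lemma H1_reflect_between_zeros:
  fixes h p :: "real \<Rightarrow> real"
  assumes Hp: "H1 l u h p" and cp: "continuous_on {l..u} p" and ab: "l < a" "a \<le> b" "b \<le> u"
    and ha: "h a = 0" and hb: "h b = 0"
  shows "H1 l u (\<lambda>s. if s \<in> {a..b} then - h s else h s) (\<lambda>s. if s \<in> {a..b} then - p s else p s)"
  unfolding H1_def
proof (intro conjI ballI)
  have ip: "set_integrable lborel {l..u} p" by (rule borel_integrable_atLeastAtMost'[OF cp])
  have "set_integrable lborel {a..b} p"
    by (rule borel_integrable_atLeastAtMost'[OF continuous_on_subset[OF cp]]) (use ab in auto)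
  moreover have "{l..u} \<inter> {a..b} = {a..b}" using ab by auto
  ultimately have iind: "set_integrable lborel {l..u} (\<lambda>s. indicator {a..b} s * p s)"
    by (simp only: set_integrable_indicator_mult_iff)
  have reflected: "(\<lambda>s. if s \<in> {a..b} then - p s else p s) = (\<lambda>s. p s - 2 * (indicator {a..b} s * p s))"
    by (auto simp: indicator_def)
  show "set_integrable lborel {l..u} (\<lambda>s. if s \<in> {a..b} then - p s else p s)"
    unfolding reflected using ip iind by (intro set_integral_diff) auto
  have "(\<lambda>s. (if s \<in> {a..b} then - p s else p s)\<^sup>2) = (\<lambda>s. (p s)\<^sup>2)" by auto
  then show "set_integrable lborel {l..u} (\<lambda>s. (if s \<in> {a..b} then - p s else p s)\<^sup>2)"
    using H1_set_integrable_square[OF Hp order_refl] by simp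
  fix x assume x: "x \<in> {l..u}"
  have "(LINT s:{l..x}|lborel. (if s \<in> {a..b} then - p s else p s))
      = (LINT s:{l..x}|lborel. p s) - 2 * (LINT s:({l..x} \<inter> {a..b})|lborel. p s)"
    unfolding reflected using set_integrable_subset[OF ip] set_integrable_subset[OF iind] x
    by (simp add: set_integral_diff set_integral_indicator_mult)
  also have "\<dots> = (h x - h l) - 2 * (if x < a then 0 else if x \<le> b then h x else 0)"
    using H1_eq_set_integral[OF Hp x] H1_set_integral_between_zeros[OF Hp ab ha hb x] by simp
  finally show "(if x \<in> {a..b} then - h x else h x)
      = (if l \<in> {a..b} then - h l else h l) + (LBINT s=l..x. (if s \<in> {a..b} then - p s else p s))"
    using x ab by (auto simp: interval_integral_Icc)
qed

lemma du_bois_reymond: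
  fixes A :: "real \<Rightarrow> real"
  assumes ab: "a < b" and iA: "set_integrable lborel {a..b} A"
    and iA2: "set_integrable lborel {a..b} (\<lambda>r. (A r)\<^sup>2)"
    and orth: "\<And>\<phi> \<phi>'. H1 a b \<phi> \<phi>' \<Longrightarrow> \<phi> a = 0 \<Longrightarrow> \<phi> b = 0 \<Longrightarrow> (LINT r:{a..b}|lborel. A r * \<phi>' r) = 0"
  obtains c where "AE r in lborel. r \<in> {a..b} \<longrightarrow> A r = c"
proof -
  define c where "c = (LINT r:{a..b}|lborel. A r) / (b - a)"
  have ic: "set_integrable lborel {a..b} (\<lambda>_. c)" by (rule borel_integrable_atLeastAtMost') simp
  have iAc: "set_integrable lborel {a..b} (\<lambda>r. A r - c)" using iA ic by (rule set_integral_diff)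
  have ic2: "set_integrable lborel {a..b} (\<lambda>_. c\<^sup>2)" by (rule borel_integrable_atLeastAtMost') simp
  have "set_integrable lborel {a..b} (\<lambda>r. (A r)\<^sup>2 - 2 * c * A r + c\<^sup>2)"
    using iA2 iA ic2 by (intro set_integral_add set_integral_diff) auto
  then have iAc2: "set_integrable lborel {a..b} (\<lambda>r. (A r - c)\<^sup>2)"
    by (simp add: power2_diff algebra_simps)
  have mean_zero: "(LINT r:{a..b}|lborel. A r - c) = 0"
    using set_integral_diff(2)[OF iA ic] set_integral_const[of "{a..b}" lborel c] ab
    by (simp add: c_def)
  define \<phi> where "\<phi> = (\<lambda>x. LBINT r=a..x. A r - c)"
  have "H1 a b \<phi> (\<lambda>r. A r - c)" unfolding H1_def \<phi>_def using iAc iAc2 by simp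
  moreover have "\<phi> a = 0" "\<phi> b = 0"
    using mean_zero ab by (simp_all add: \<phi>_def interval_integral_Icc)
  ultimately have orth_c: "(LINT r:{a..b}|lborel. A r * (A r - c)) = 0" by (rule orth)
  have "set_integrable lborel {a..b} (\<lambda>r. (A r - c)\<^sup>2 + c * (A r - c))"
    using iAc2 iAc by (intro set_integral_add) auto
  then have iAAc: "set_integrable lborel {a..b} (\<lambda>r. A r * (A r - c))"
    by (simp add: power2_eq_square algebra_simps)
  have "(LINT r:{a..b}|lborel. (A r - c)\<^sup>2) = (LINT r:{a..b}|lborel. A r * (A r - c) - c * (A r - c))"
    by (rule set_integral_cong_Icc) (simp add: power2_eq_square algebra_simps)
  also have "\<dots> = 0"
    using set_integral_diff(2)[OF iAAc set_integrable_mult_right[OF iAc, of c]] orth_c mean_zero by simp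
  finally show ?thesis using that set_integral_Icc_eq_0_imp_AE[OF iAc2] by auto
qed

lemma quartic_nonneg_imp_linear_coeff_zero:
  fixes a b c d :: real
  assumes "\<And>s. 0 \<le> s * a + s\<^sup>2 * b + s^3 * c + s^4 * d"
  shows "a = 0"
proof -
  define P where "P = (\<lambda>s::real. s * a + s\<^sup>2 * b + s^3 * c + s^4 * d)"
  have "DERIV P 0 :> a" unfolding P_def by (auto intro!: derivative_eq_intros)
  moreover have "\<forall>y. \<bar>0 - y\<bar> < 1 \<longrightarrow> P 0 \<le> P y" using assms unfolding P_def by simp
  ultimately show "a = 0" by (rule DERIV_local_min[OF _ zero_less_one])
qed

lemma gronwall_exp:
  fixes u u' :: "real \<Rightarrow> real"
  assumes xy: "x \<le> y"
    and du: "\<And>r. r \<in> {x..y} \<Longrightarrow> (u has_real_derivative u' r) (at r within {x..y})"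
    and bound: "\<And>r. r \<in> {x..y} \<Longrightarrow> u' r \<le> L * u r"
  shows "u y * exp (- L * y) \<le> u x * exp (- L * x)"
proof -
  define F where "F = (\<lambda>r. u r * exp (- L * r))"
  have dF: "(F has_real_derivative (u' r - L * u r) * exp (- L * r)) (at r within {x..y})"
    if "r \<in> {x..y}" for r
  proof -
    have "((\<lambda>r. exp (- L * r)) has_real_derivative exp (- L * r) * (- L)) (at r within {x..y})"
      by (rule DERIV_cong[OF DERIV_chain2[OF DERIV_exp DERIV_cmult[OF DERIV_ident]]]) simp
    from DERIV_mult[OF du[OF that] this] show ?thesis
      unfolding F_def by (rule DERIV_cong) (simp add: algebra_simps)
  qed
  have "F y \<le> F x"
  proof (rule DERIV_nonpos_imp_decreasing_open[OF xy])
    fix r assume r: "x < r" "r < y"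
    then have "at r within {x..y} = at r" by (intro at_within_interior) auto
    then show "\<exists>d. (F has_real_derivative d) (at r) \<and> d \<le> 0"
      using dF[of r] bound[of r] r by (auto intro!: mult_nonpos_nonneg)
  next
    show "continuous_on {x..y} F" by (rule DERIV_continuous_on[OF dF])
  qed
  then show ?thesis unfolding F_def .
qed

text \<open>With \<open>w = r\<^sup>2 h'\<close> and \<open>f = f(h)\<close>, the left side is the derivative of \<open>h\<^sup>2 + w\<^sup>2\<close>
  along the Euler-Lagrange system \<open>h' = w / r\<^sup>2\<close>, \<open>w' = 6 h + r\<^sup>2 f h\<close>.\<close>
lemma euler_lagrange_system_growth_bound:
  fixes y w f x K R :: real
  assumes fK: "\<bar>f\<bar> \<le> K" and x1: "1 \<le> x" and xR: "x \<le> R"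
  shows "2 * y * (w / x\<^sup>2) + 2 * w * (6 * y + x\<^sup>2 * (f * y)) \<le> (7 + R\<^sup>2 * K) * (y\<^sup>2 + w\<^sup>2)"
proof -
  define M where "M = 1 / x\<^sup>2 + 6 + x\<^sup>2 * f"
  have x2: "1 \<le> x\<^sup>2" using x1 by (simp add: one_le_power)
  then have "\<bar>1 / x\<^sup>2\<bar> \<le> 1" by (simp add: divide_le_eq)
  moreover have "\<bar>x\<^sup>2 * f\<bar> \<le> R\<^sup>2 * K"
    using x1 xR fK by (simp add: abs_mult mult_mono power_mono)
  ultimately have M_bound: "\<bar>M\<bar> \<le> 7 + R\<^sup>2 * K" unfolding M_def by linarith
  have "2 * y * (w / x\<^sup>2) + 2 * w * (6 * y + x\<^sup>2 * (f * y)) = (2 * y * w) * M"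
    unfolding M_def using x1 by (simp add: field_simps)
  also have "\<dots> \<le> \<bar>2 * y * w\<bar> * \<bar>M\<bar>" by (metis abs_ge_self abs_mult)
  also have "\<dots> \<le> (y\<^sup>2 + w\<^sup>2) * (7 + R\<^sup>2 * K)"
  proof (rule mult_mono)
    show "\<bar>2 * y * w\<bar> \<le> y\<^sup>2 + w\<^sup>2"
      using sum_squares_bound[of "\<bar>y\<bar>" "\<bar>w\<bar>"] by (simp add: abs_mult)
  qed (use M_bound in auto)
  finally show ?thesis by (simp add: mult.commute)
qed

section \<open>The radial energy and its minimisers\<close>

definition energy_density :: "real \<Rightarrow> (real \<Rightarrow> real) \<Rightarrow> (real \<Rightarrow> real) \<Rightarrow> real \<Rightarrow> real" where
  "energy_density t g g' r = ((1/2) * (g' r)\<^sup>2 + 3 / r\<^sup>2 * (g r)\<^sup>2 + t / 8 * (1 - (g r)\<^sup>2)\<^sup>2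
     + hplus t / 8 * (1 + 3 * (g r)^4 - 4 * (g r)^3)) * r\<^sup>2"

text \<open>The Euler-Lagrange equation of the energy is \<open>(r\<^sup>2 h')' = euler_lagrange_rhs t r h\<close>.\<close>
definition euler_lagrange_rhs :: "real \<Rightarrow> real \<Rightarrow> real \<Rightarrow> real" where
  "euler_lagrange_rhs t r y = 6 * y + r\<^sup>2 * (fh t y * y)"

lemma hplus_pos: "t \<ge> 0 \<Longrightarrow> hplus t > 0"
  unfolding hplus_def by (simp add: add_pos_nonneg)

lemma energy_eq_set_integral:
  assumes "1 \<le> R"
  shows "energy t R g g' = (LINT r:{1..R}|lborel. energy_density t g g' r)"
  unfolding energy_def energy_density_def one_ereal_def by (rule interval_integral_Icc) (use assms in simp)

lemma energy_density_set_integrable: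
  assumes "H1 1 R g g'"
  shows "set_integrable lborel {1..R} (energy_density t g g')"
proof -
  have "set_integrable lborel {1..R} (\<lambda>r. (g' r)\<^sup>2 * (r\<^sup>2 / 2) + (3 / r\<^sup>2 * (g r)\<^sup>2 + t / 8 * (1 - (g r)\<^sup>2)\<^sup>2
       + hplus t / 8 * (1 + 3 * (g r)^4 - 4 * (g r)^3)) * r\<^sup>2)"
    by (rule set_integrable_mult_continuous_add[OF H1_set_integrable_square[OF assms order_refl]])
      (auto intro!: continuous_intros H1_continuous_on[OF assms])
  moreover have "(\<lambda>r. (g' r)\<^sup>2 * (r\<^sup>2 / 2) + (3 / r\<^sup>2 * (g r)\<^sup>2 + t / 8 * (1 - (g r)\<^sup>2)\<^sup>2
       + hplus t / 8 * (1 + 3 * (g r)^4 - 4 * (g r)^3)) * r\<^sup>2) = energy_density t g g'"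
    unfolding energy_density_def by (auto simp: algebra_simps)
  ultimately show ?thesis by simp
qed

lemma energy_density_add_scaled:
  assumes "r \<noteq> 0"
  shows "energy_density t (\<lambda>r. g r + s * \<phi> r) (\<lambda>r. g' r + s * \<phi>' r) r
    = energy_density t g g' r
      + s * (g' r * \<phi>' r * r\<^sup>2 + euler_lagrange_rhs t r (g r) * \<phi> r)
      + s\<^sup>2 * ((\<phi>' r)\<^sup>2 * (r\<^sup>2 / 2) + (3 * (\<phi> r)\<^sup>2 + r\<^sup>2 * (\<phi> r)\<^sup>2
          * (t * (3 * (g r)\<^sup>2 - 1) / 4 + hplus t * (9 * (g r)\<^sup>2 - 6 * g r) / 4)))
      + s^3 * (r\<^sup>2 * (\<phi> r)^3 * (t * g r / 2 + hplus t * (3 * g r - 1) / 2))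
      + s^4 * (r\<^sup>2 * (\<phi> r)^4 * (t / 8 + 3 * hplus t / 8))"
  using assms unfolding energy_density_def euler_lagrange_rhs_def fh_def
  by (simp add: field_simps power2_eq_square power3_eq_cube power4_eq_xxxx)

lemma energy_add_scaled:
  assumes R: "1 \<le> R" and g: "H1 1 R g g'" and \<phi>: "H1 1 R \<phi> \<phi>'"
  obtains E2 E3 E4 where "\<And>s. energy t R (\<lambda>r. g r + s * \<phi> r) (\<lambda>r. g' r + s * \<phi>' r)
      = energy t R g g'
        + s * (LINT r:{1..R}|lborel. g' r * \<phi>' r * r\<^sup>2 + euler_lagrange_rhs t r (g r) * \<phi> r)
        + s\<^sup>2 * E2 + s^3 * E3 + s^4 * E4"
proof -
  define e1 where "e1 = (\<lambda>r. g' r * \<phi>' r * r\<^sup>2 + euler_lagrange_rhs t r (g r) * \<phi> r)"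
  define e2 where "e2 = (\<lambda>r. (\<phi>' r)\<^sup>2 * (r\<^sup>2 / 2) + (3 * (\<phi> r)\<^sup>2 + r\<^sup>2 * (\<phi> r)\<^sup>2
      * (t * (3 * (g r)\<^sup>2 - 1) / 4 + hplus t * (9 * (g r)\<^sup>2 - 6 * g r) / 4)))"
  define e3 where "e3 = (\<lambda>r. r\<^sup>2 * (\<phi> r)^3 * (t * g r / 2 + hplus t * (3 * g r - 1) / 2))"
  define e4 where "e4 = (\<lambda>r. r\<^sup>2 * (\<phi> r)^4 * (t / 8 + 3 * hplus t / 8))"
  have cg: "continuous_on {1..R} g" by (rule H1_continuous_on[OF g])
  have c\<phi>: "continuous_on {1..R} \<phi>" by (rule H1_continuous_on[OF \<phi>])
  have "set_integrable lborel {1..R} (\<lambda>r. g' r * \<phi>' r)"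
    using g \<phi> unfolding H1_def by (intro set_integrable_mult_L2) auto
  then have i1: "set_integrable lborel {1..R} e1" unfolding e1_def euler_lagrange_rhs_def fh_def
    by (rule set_integrable_mult_continuous_add) (auto intro!: continuous_intros cg c\<phi>)
  have i2: "set_integrable lborel {1..R} e2" unfolding e2_def
    by (rule set_integrable_mult_continuous_add[OF H1_set_integrable_square[OF \<phi> order_refl]])
      (auto intro!: continuous_intros cg c\<phi>)
  have i3: "set_integrable lborel {1..R} e3" unfolding e3_def
    by (rule borel_integrable_atLeastAtMost') (auto intro!: continuous_intros cg c\<phi>)
  have i4: "set_integrable lborel {1..R} e4" unfolding e4_def
    by (rule borel_integrable_atLeastAtMost') (auto intro!: continuous_intros c\<phi>)
  have "energy t R (\<lambda>r. g r + s * \<phi> r) (\<lambda>r. g' r + s * \<phi>' r)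
     = (LINT r:{1..R}|lborel. energy_density t g g' r + s * e1 r + s\<^sup>2 * e2 r + s^3 * e3 r + s^4 * e4 r)" for s
    unfolding energy_eq_set_integral[OF R]
    by (rule set_integral_cong_Icc) (simp add: energy_density_add_scaled e1_def e2_def e3_def e4_def)
  also have "\<dots> s = energy t R g g' + s * (LINT r:{1..R}|lborel. e1 r) + s\<^sup>2 * (LINT r:{1..R}|lborel. e2 r)
        + s^3 * (LINT r:{1..R}|lborel. e3 r) + s^4 * (LINT r:{1..R}|lborel. e4 r)" for s
    unfolding energy_eq_set_integral[OF R] using energy_density_set_integrable[OF g] i1 i2 i3 i4
    by (simp add: set_integral_add set_integral_mult_right set_integrable_mult_right)
  finally show ?thesis using that unfolding e1_def by blast
qed

lemma energy_reflect:
  assumes R: "1 \<le> R" and g: "H1 1 R g g'" and ab: "1 \<le> a" "a \<le> b" "b \<le> R"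
  shows "energy t R (\<lambda>s. if s \<in> {a..b} then - g s else g s) (\<lambda>s. if s \<in> {a..b} then - g' s else g' s)
    = energy t R g g' + (LINT r:{a..b}|lborel. hplus t * (g r)^3 * r\<^sup>2)"
proof -
  have ab_inside: "{1..R} \<inter> {a..b} = {a..b}" using ab by auto
  have "continuous_on {a..b} (\<lambda>r. hplus t * (g r)^3 * r\<^sup>2)"
    by (intro continuous_intros continuous_on_subset[OF H1_continuous_on[OF g]]) (use ab in auto)
  then have iind: "set_integrable lborel {1..R} (\<lambda>r. indicator {a..b} r * (hplus t * (g r)^3 * r\<^sup>2))"
    unfolding set_integrable_indicator_mult_iff ab_inside by (rule borel_integrable_atLeastAtMost')
  have "energy t R (\<lambda>s. if s \<in> {a..b} then - g s else g s) (\<lambda>s. if s \<in> {a..b} then - g' s else g' s)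
      = (LINT r:{1..R}|lborel. energy_density t g g' r + indicator {a..b} r * (hplus t * (g r)^3 * r\<^sup>2))"
    unfolding energy_eq_set_integral[OF R]
    by (rule set_integral_cong_Icc) (auto simp: energy_density_def algebra_simps indicator_def)
  also have "\<dots> = energy t R g g' + (LINT r:{1..R}|lborel. indicator {a..b} r * (hplus t * (g r)^3 * r\<^sup>2))"
    using set_integral_add(2)[OF energy_density_set_integrable[OF g] iind]
    by (simp add: energy_eq_set_integral[OF R])
  also have "(LINT r:{1..R}|lborel. indicator {a..b} r * (hplus t * (g r)^3 * r\<^sup>2))
      = (LINT r:{a..b}|lborel. hplus t * (g r)^3 * r\<^sup>2)"
    by (simp only: set_integral_indicator_mult ab_inside)
  finally show ?thesis .
qed

lemma picone_pointwise:
  fixes V D H P Z r F \<alpha> \<beta> \<gamma> :: real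
  assumes "H \<noteq> 0" "r \<noteq> 0" "Z = P * r\<^sup>2"
  shows "(\<alpha> * D\<^sup>2 + \<beta> / r\<^sup>2 * V\<^sup>2 + \<alpha> * (F + \<gamma>) * V\<^sup>2) * r\<^sup>2
    = (\<alpha> * (D / H - V * P / H\<^sup>2)\<^sup>2 * H\<^sup>2 + (\<beta> - 6 * \<alpha>) / r\<^sup>2 * V\<^sup>2 + \<alpha> * \<gamma> * V\<^sup>2) * r\<^sup>2
      + \<alpha> * ((D * V + V * D) * (Z / H) + V * V * ((6 * H + r\<^sup>2 * (F * H)) / H - Z * P / H\<^sup>2))"
  using assms by (simp add: field_simps power2_eq_square)

text \<open>Picone's identity: the cross terms form the exact derivative \<open>(v\<^sup>2 z / h)'\<close> with
  \<open>z = r\<^sup>2 h'\<close>, whose integral vanishes because \<open>v\<close> vanishes at both ends.\<close>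
lemma ground_state_substitution:
  fixes h p z F v v' :: "real \<Rightarrow> real"
  assumes R: "1 \<le> R" and h0: "\<And>x. x \<in> {1..R} \<Longrightarrow> h x \<noteq> 0"
    and cp: "continuous_on {1..R} p" and cF: "continuous_on {1..R} F"
    and dh: "\<And>x. x \<in> {1..R} \<Longrightarrow> (h has_real_derivative p x) (at x within {1..R})"
    and zeq: "\<And>x. x \<in> {1..R} \<Longrightarrow> z x = p x * x\<^sup>2"
    and dz: "\<And>x. x \<in> {1..R} \<Longrightarrow> (z has_real_derivative 6 * h x + x\<^sup>2 * (F x * h x)) (at x within {1..R})"
    and v: "H1 1 R v v'" "v 1 = 0" "v R = 0"
  shows "(LINT r:{1..R}|lborel. (\<alpha> * (v' r)\<^sup>2 + \<beta> / r\<^sup>2 * (v r)\<^sup>2 + \<alpha> * (F r + \<gamma>) * (v r)\<^sup>2) * r\<^sup>2)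
    = (LINT r:{1..R}|lborel. (\<alpha> * (v' r / h r - v r * p r / (h r)\<^sup>2)\<^sup>2 * (h r)\<^sup>2
          + (\<beta> - 6 * \<alpha>) / r\<^sup>2 * (v r)\<^sup>2 + \<alpha> * \<gamma> * (v r)\<^sup>2) * r\<^sup>2)"
proof -
  have ch: "continuous_on {1..R} h" by (rule DERIV_continuous_on[OF dh])
  define w' where "w' = (\<lambda>x. (6 * h x + x\<^sup>2 * (F x * h x)) / h x - z x * p x / (h x)\<^sup>2)"
  have "H1 1 R z (\<lambda>x. 6 * h x + x\<^sup>2 * (F x * h x))"
    by (rule H1_if_continuous_derivative[OF R _ dz]) (intro continuous_intros ch cF)
  from H1_divide[OF R this cp dh h0]
  have wH: "H1 1 R (\<lambda>x. z x / h x) w'" unfolding w'_def .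
  define D where "D = (\<lambda>s. (v' s * v s + v s * v' s) * (z s / h s) + v s * v s * w' s)"
  have R_in: "R \<in> {1..R}" using R by auto
  have iD: "set_integrable lborel {1..R} D"
    unfolding D_def by (rule H1_product_set_integrable[OF H1_mult[OF v(1) v(1)] wH order_refl])
  have D_zero: "(LINT s:{1..R}|lborel. D s) = 0"
    using H1_product_rule[OF H1_mult[OF v(1) v(1)] wH R_in] v by (simp add: D_def)
  define I where "I = (\<lambda>r. (\<alpha> * (v' r)\<^sup>2 + \<beta> / r\<^sup>2 * (v r)\<^sup>2 + \<alpha> * (F r + \<gamma>) * (v r)\<^sup>2) * r\<^sup>2)"
  have iI: "set_integrable lborel {1..R} I"
  proof -
    have "set_integrable lborel {1..R}
        (\<lambda>r. (v' r)\<^sup>2 * (\<alpha> * r\<^sup>2) + (\<beta> / r\<^sup>2 * (v r)\<^sup>2 + \<alpha> * (F r + \<gamma>) * (v r)\<^sup>2) * r\<^sup>2)"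
      by (rule set_integrable_mult_continuous_add[OF H1_set_integrable_square[OF v(1) order_refl]])
        (auto intro!: continuous_intros H1_continuous_on[OF v(1)] cF)
    then show ?thesis unfolding I_def by (simp add: algebra_simps)
  qed
  have "(LINT r:{1..R}|lborel. (\<alpha> * (v' r / h r - v r * p r / (h r)\<^sup>2)\<^sup>2 * (h r)\<^sup>2
          + (\<beta> - 6 * \<alpha>) / r\<^sup>2 * (v r)\<^sup>2 + \<alpha> * \<gamma> * (v r)\<^sup>2) * r\<^sup>2)
      = (LINT r:{1..R}|lborel. I r - \<alpha> * D r)"
  proof (rule set_integral_cong_Icc)
    fix r assume r: "r \<in> {1..R}"
    then have "r \<noteq> 0" by auto
    from picone_pointwise[OF h0[OF r] this zeq[OF r]]
    show "(\<alpha> * (v' r / h r - v r * p r / (h r)\<^sup>2)\<^sup>2 * (h r)\<^sup>2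
          + (\<beta> - 6 * \<alpha>) / r\<^sup>2 * (v r)\<^sup>2 + \<alpha> * \<gamma> * (v r)\<^sup>2) * r\<^sup>2 = I r - \<alpha> * D r"
      unfolding I_def D_def w'_def by simp
  qed
  also have "\<dots> = (LINT r:{1..R}|lborel. I r) - \<alpha> * (LINT r:{1..R}|lborel. D r)"
    using set_integral_diff(2)[OF iI set_integrable_mult_right[OF iD, of \<alpha>]] by simp
  finally show ?thesis using D_zero by (simp add: I_def)
qed

locale energy_minimizer =
  fixes t R :: real and h h' :: "real \<Rightarrow> real"
  assumes R_gt_1: "R > 1" and H1_h: "H1 1 R h h'" and h_1: "h 1 = 1" and h_R: "h R = 1"
    and minimal: "\<And>g g'. H1 1 R g g' \<Longrightarrow> g 1 = 1 \<Longrightarrow> g R = 1 \<Longrightarrow> energy t R h h' \<le> energy t R g g'"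
begin

lemma R_ge_1: "1 \<le> R"
  using R_gt_1 by simp

lemma continuous_on_h: "continuous_on {1..R} h"
  by (rule H1_continuous_on[OF H1_h])

lemma continuous_on_euler_lagrange_rhs: "continuous_on {1..R} (\<lambda>r. euler_lagrange_rhs t r (h r))"
  unfolding euler_lagrange_rhs_def fh_def by (intro continuous_intros continuous_on_h)

lemma weak_euler_lagrange:
  assumes \<phi>: "H1 1 R \<phi> \<phi>'" "\<phi> 1 = 0" "\<phi> R = 0"
  shows "(LINT r:{1..R}|lborel. h' r * \<phi>' r * r\<^sup>2 + euler_lagrange_rhs t r (h r) * \<phi> r) = 0"
proof -
  obtain E2 E3 E4 where expansion: "\<And>s. energy t R (\<lambda>r. h r + s * \<phi> r) (\<lambda>r. h' r + s * \<phi>' r)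
      = energy t R h h'
        + s * (LINT r:{1..R}|lborel. h' r * \<phi>' r * r\<^sup>2 + euler_lagrange_rhs t r (h r) * \<phi> r)
        + s\<^sup>2 * E2 + s^3 * E3 + s^4 * E4"
    using energy_add_scaled[OF R_ge_1 H1_h \<phi>(1)] by blast
  have "0 \<le> s * (LINT r:{1..R}|lborel. h' r * \<phi>' r * r\<^sup>2 + euler_lagrange_rhs t r (h r) * \<phi> r)
      + s\<^sup>2 * E2 + s^3 * E3 + s^4 * E4" for s
  proof -
    have "energy t R h h' \<le> energy t R (\<lambda>r. h r + s * \<phi> r) (\<lambda>r. h' r + s * \<phi>' r)"
      by (rule minimal[OF H1_add_scaled[OF H1_h \<phi>(1)]]) (simp_all add: h_1 h_R \<phi>)
    then show ?thesis using expansion[of s] by linarith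
  qed
  then show ?thesis by (rule quartic_nonneg_imp_linear_coeff_zero)
qed

definition euler_lagrange_primitive :: "real \<Rightarrow> real" where
  "euler_lagrange_primitive x = (LBINT s=1..x. euler_lagrange_rhs t s (h s))"

lemma H1_euler_lagrange_primitive:
  "H1 1 R euler_lagrange_primitive (\<lambda>s. euler_lagrange_rhs t s (h s))"
  unfolding euler_lagrange_primitive_def one_ereal_def
  by (rule H1_primitive[OF continuous_on_euler_lagrange_rhs])

lemma weak_euler_lagrange_integrated:
  assumes \<phi>: "H1 1 R \<phi> \<phi>'" "\<phi> 1 = 0" "\<phi> R = 0"
  shows "(LINT r:{1..R}|lborel. (h' r * r\<^sup>2 - euler_lagrange_primitive r) * \<phi>' r) = 0"
proof -
  let ?B = "\<lambda>s. euler_lagrange_rhs t s (h s)" and ?G = euler_lagrange_primitive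
  have R_in: "R \<in> {1..R}" using R_gt_1 by auto
  have "set_integrable lborel {1..R} (\<lambda>r. h' r * \<phi>' r)"
    using H1_h \<phi>(1) unfolding H1_def by (intro set_integrable_mult_L2) auto
  then have i1: "set_integrable lborel {1..R} (\<lambda>r. h' r * \<phi>' r * r\<^sup>2 + ?B r * \<phi> r)"
    by (rule set_integrable_mult_continuous_add)
      (auto intro!: continuous_intros continuous_on_euler_lagrange_rhs H1_continuous_on[OF \<phi>(1)])
  have "(LINT r:{1..R}|lborel. (h' r * r\<^sup>2 - ?G r) * \<phi>' r)
      = (LINT r:{1..R}|lborel. (h' r * \<phi>' r * r\<^sup>2 + ?B r * \<phi> r) - (?B r * \<phi> r + ?G r * \<phi>' r))"
    by (rule set_integral_cong_Icc) (simp add: algebra_simps)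
  also have "\<dots> = 0"
    using set_integral_diff(2)[OF i1 H1_product_set_integrable[OF H1_euler_lagrange_primitive \<phi>(1) order_refl]]
      weak_euler_lagrange[OF \<phi>] H1_product_rule[OF H1_euler_lagrange_primitive \<phi>(1) R_in] \<phi>
    by simp
  finally show ?thesis .
qed

lemma weighted_derivative_eq_AE:
  obtains c where "AE r in lborel. r \<in> {1..R} \<longrightarrow> h' r * r\<^sup>2 = c + euler_lagrange_primitive r"
proof -
  define A where "A = (\<lambda>r. h' r * r\<^sup>2 - euler_lagrange_primitive r)"
  have ih': "set_integrable lborel {1..R} h'" by (rule H1_set_integrable[OF H1_h order_refl])
  have cG: "continuous_on {1..R} euler_lagrange_primitive"
    by (rule H1_continuous_on[OF H1_euler_lagrange_primitive])
  have "set_integrable lborel {1..R} (\<lambda>r. h' r * r\<^sup>2)"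
    by (rule set_integrable_mult_continuous[OF ih']) (intro continuous_intros)
  then have iA: "set_integrable lborel {1..R} A"
    unfolding A_def using borel_integrable_atLeastAtMost'[OF cG] by (rule set_integral_diff)
  have "set_integrable lborel {1..R} (\<lambda>r. (h' r)\<^sup>2 * r^4
      + (h' r * (-2 * r\<^sup>2 * euler_lagrange_primitive r) + (euler_lagrange_primitive r)\<^sup>2))"
    by (intro set_integral_add set_integrable_mult_continuous set_integrable_mult_continuous_add
        H1_set_integrable_square[OF H1_h order_refl] ih') (auto intro!: continuous_intros cG)
  then have iA2: "set_integrable lborel {1..R} (\<lambda>r. (A r)\<^sup>2)"
    unfolding A_def by (simp add: power2_eq_square power4_eq_xxxx algebra_simps)
  obtain c where "AE r in lborel. r \<in> {1..R} \<longrightarrow> A r = c"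
    using du_bois_reymond[OF R_gt_1 iA iA2] weak_euler_lagrange_integrated unfolding A_def by blast
  then show ?thesis
    by (rule that[of c, OF eventually_mono]) (auto simp: A_def)
qed

lemma regular_representative:
  obtains p z where "continuous_on {1..R} p" "H1 1 R h p"
    "AE r in lborel. r \<in> {1..R} \<longrightarrow> h' r = p r"
    "\<And>x. x \<in> {1..R} \<Longrightarrow> (h has_real_derivative p x) (at x within {1..R})"
    "\<And>x. x \<in> {1..R} \<Longrightarrow> z x = p x * x\<^sup>2"
    "\<And>x. x \<in> {1..R} \<Longrightarrow> (z has_real_derivative euler_lagrange_rhs t x (h x)) (at x within {1..R})"
proof -
  obtain c where ae: "AE r in lborel. r \<in> {1..R} \<longrightarrow> h' r * r\<^sup>2 = c + euler_lagrange_primitive r"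
    using weighted_derivative_eq_AE by blast
  define z where "z = (\<lambda>x. c + euler_lagrange_primitive x)"
  have "H1 1 R (\<lambda>_. c) (\<lambda>_. 0)" unfolding H1_def set_integrable_def by simp
  then have Hz: "H1 1 R z (\<lambda>s. euler_lagrange_rhs t s (h s))"
    unfolding z_def using H1_add_scaled[OF _ H1_euler_lagrange_primitive, of "\<lambda>_. c" "\<lambda>_. 0" 1] by simp
  have dz: "(z has_real_derivative euler_lagrange_rhs t x (h x)) (at x within {1..R})" if "x \<in> {1..R}" for x
    by (rule H1_has_real_derivative[OF Hz continuous_on_euler_lagrange_rhs that])
  define p where "p = (\<lambda>x::real. z x / x\<^sup>2)"
  have cp: "continuous_on {1..R} p"
    unfolding p_def by (intro continuous_intros H1_continuous_on[OF Hz]) auto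
  have aep: "AE r in lborel. r \<in> {1..R} \<longrightarrow> h' r = p r"
    using ae by eventually_elim (auto simp: p_def z_def field_simps)
  have Hp: "H1 1 R h p" by (rule H1_cong_AE[OF H1_h cp aep])
  show ?thesis
  proof (rule that[OF cp Hp aep])
    fix x assume x: "x \<in> {1..R}"
    show "(h has_real_derivative p x) (at x within {1..R})" by (rule H1_has_real_derivative[OF Hp cp x])
    show "z x = p x * x\<^sup>2" unfolding p_def using x by auto
    show "(z has_real_derivative euler_lagrange_rhs t x (h x)) (at x within {1..R})" by (rule dz[OF x])
  qed
qed

lemma energy_regular_representative:
  assumes Hp: "H1 1 R h p" and aep: "AE r in lborel. r \<in> {1..R} \<longrightarrow> h' r = p r"
  shows "energy t R h h' = energy t R h p"
  unfolding energy_eq_set_integral[OF R_ge_1]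
proof (rule set_integral_cong_AE_set_borel)
  show "set_borel_measurable lborel {1..R} (energy_density t h h')"
    by (rule set_borel_measurable_if_set_integrable[OF energy_density_set_integrable[OF H1_h]])
  show "set_borel_measurable lborel {1..R} (energy_density t h p)"
    by (rule set_borel_measurable_if_set_integrable[OF energy_density_set_integrable[OF Hp]])
  show "AE r in lborel. r \<in> {1..R} \<longrightarrow> energy_density t h h' r = energy_density t h p r"
    using aep by eventually_elim (simp add: energy_density_def)
qed

text \<open>If \<open>h\<close> were negative somewhere, reflecting it on a maximal interval of negativity
  keeps the boundary values and lowers the energy by the integral of \<open>h\<^sub>+ h\<^sup>3 r\<^sup>2 < 0\<close> there.\<close>
lemma nonneg:
  assumes t: "t \<ge> 0" and x: "x \<in> {1..R}"
  shows "h x \<ge> 0"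
proof (rule ccontr)
  assume "\<not> h x \<ge> 0"
  then have hx: "h x < 0" by simp
  obtain p where cp: "continuous_on {1..R} p" and Hp: "H1 1 R h p"
    and aep: "AE r in lborel. r \<in> {1..R} \<longrightarrow> h' r = p r"
    by (rule regular_representative) blast
  obtain a where a: "1 < a" "a < x" "h a = 0" "\<And>s. a < s \<Longrightarrow> s \<le> x \<Longrightarrow> h s < 0"
    by (rule last_zero_before[of 1 x h])
      (use continuous_on_subset[OF continuous_on_h, of "{1..x}"] x h_1 hx in auto)
  obtain b where b: "x < b" "b < R" "h b = 0" "\<And>s. x \<le> s \<Longrightarrow> s < b \<Longrightarrow> h s < 0"
    by (rule first_zero_after[of x R h])
      (use continuous_on_subset[OF continuous_on_h, of "{x..R}"] x h_R hx in auto)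
  have "(LINT r:{a..b}|lborel. hplus t * (h r)^3 * r\<^sup>2) < 0"
  proof (rule set_integral_Icc_neg)
    show "continuous_on {a..b} (\<lambda>r. hplus t * (h r)^3 * r\<^sup>2)"
      by (intro continuous_intros continuous_on_subset[OF continuous_on_h]) (use a b in auto)
    fix s assume "a < s" "s < b"
    then have "h s < 0" "s \<noteq> 0" using a b by (cases "s \<le> x"; force)+
    then show "hplus t * (h s)^3 * s\<^sup>2 < 0"
      using hplus_pos[OF t] by (simp add: mult_pos_neg mult_neg_pos power_odd_eq)
  qed (use a b in auto)
  then have "energy t R (\<lambda>s. if s \<in> {a..b} then - h s else h s) (\<lambda>s. if s \<in> {a..b} then - p s else p s)
      < energy t R h h'"
    using energy_reflect[OF R_ge_1 Hp, of a b] energy_regular_representative[OF Hp aep] a b by simp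
  moreover have "H1 1 R (\<lambda>s. if s \<in> {a..b} then - h s else h s) (\<lambda>s. if s \<in> {a..b} then - p s else p s)"
    by (rule H1_reflect_between_zeros[OF Hp cp]) (use a b in auto)
  ultimately show False using minimal a b h_1 h_R by fastforce
qed

lemma derivative_vanishes_at_zero:
  assumes t: "t \<ge> 0" and x: "x \<in> {1..R}" and hx: "h x = 0"
    and d: "(h has_real_derivative d) (at x within {1..R})"
  shows "d = 0"
proof (rule DERIV_local_min)
  have x1: "1 < x" "x < R" using x hx h_1 h_R by (auto simp: order_le_less)
  then have "at x within {1..R} = at x" by (intro at_within_interior) auto
  then show "(h has_real_derivative d) (at x)" using d by simp
  show "0 < min (x - 1) (R - x)" using x1 by simp
  show "\<forall>y. \<bar>x - y\<bar> < min (x - 1) (R - x) \<longrightarrow> h x \<le> h y"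
  proof (intro allI impI)
    fix y assume "\<bar>x - y\<bar> < min (x - 1) (R - x)"
    then have "y \<in> {1..R}" by auto
    then show "h x \<le> h y" using nonneg[OF t] hx by simp
  qed
qed

text \<open>At a zero of \<open>h\<close> also \<open>z = r\<^sup>2 h'\<close> vanishes, and \<open>(h, z)\<close> solves a linear ODE system;
  Gronwall's estimate for \<open>h\<^sup>2 + z\<^sup>2\<close> then contradicts \<open>h R = 1\<close>.\<close>
lemma positive:
  assumes t: "t \<ge> 0" and x: "x \<in> {1..R}"
  shows "h x > 0"
proof (rule ccontr)
  assume "\<not> h x > 0"
  then have hx: "h x = 0" using nonneg[OF t x] by simp
  obtain p z where dh: "\<And>x. x \<in> {1..R} \<Longrightarrow> (h has_real_derivative p x) (at x within {1..R})"
    and zeq: "\<And>x. x \<in> {1..R} \<Longrightarrow> z x = p x * x\<^sup>2"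
    and dz: "\<And>x. x \<in> {1..R} \<Longrightarrow> (z has_real_derivative euler_lagrange_rhs t x (h x)) (at x within {1..R})"
    by (rule regular_representative) blast
  have zx: "z x = 0" using derivative_vanishes_at_zero[OF t x hx dh[OF x]] zeq[OF x] by simp
  have cf: "continuous_on {1..R} (\<lambda>r. fh t (h r))" unfolding fh_def by (intro continuous_intros continuous_on_h)
  obtain K where K: "\<And>r. r \<in> {1..R} \<Longrightarrow> \<bar>fh t (h r)\<bar> \<le> K" using continuous_on_Icc_bound[OF cf] by blast
  have sub: "{x..R} \<subseteq> {1..R}" using x by auto
  have "((h R)\<^sup>2 + (z R)\<^sup>2) * exp (- (7 + R\<^sup>2 * K) * R) \<le> ((h x)\<^sup>2 + (z x)\<^sup>2) * exp (- (7 + R\<^sup>2 * K) * x)"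
  proof (rule gronwall_exp[where u="\<lambda>r. (h r)\<^sup>2 + (z r)\<^sup>2"])
    fix r assume r: "r \<in> {x..R}"
    then have r1: "r \<in> {1..R}" using sub by auto
    show "((\<lambda>r. (h r)\<^sup>2 + (z r)\<^sup>2) has_real_derivative 2 * h r * p r + 2 * z r * euler_lagrange_rhs t r (h r))
        (at r within {x..R})"
      using DERIV_add[OF DERIV_power[OF dh[OF r1], of 2] DERIV_power[OF dz[OF r1], of 2]]
      by (rule DERIV_cong[OF has_field_derivative_subset[OF _ sub]]) (simp add: algebra_simps)
    have "p r = z r / r\<^sup>2" using zeq[OF r1] r1 by auto
    then show "2 * h r * p r + 2 * z r * euler_lagrange_rhs t r (h r) \<le> (7 + R\<^sup>2 * K) * ((h r)\<^sup>2 + (z r)\<^sup>2)"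
      unfolding euler_lagrange_rhs_def
      using euler_lagrange_system_growth_bound[OF K[OF r1], of r R "h r" "z r"] r1 by auto
  qed (use x in simp)
  moreover have "0 < ((h R)\<^sup>2 + (z R)\<^sup>2) * exp (- (7 + R\<^sup>2 * K) * R)"
    using h_R by (intro mult_pos_pos) (simp_all add: add_pos_nonneg)
  ultimately show False using hx zx by simp
qed

end

theorem lemma5p2:
  fixes t R \<alpha> \<beta> \<gamma> :: real and h h' v v' :: "real \<Rightarrow> real"
  assumes "t \<ge> 0" and "R > 1"
    and "H1 1 R h h'" and "h 1 = 1" and "h R = 1"
    and "\<forall>g g'. H1 1 R g g' \<and> g 1 = 1 \<and> g R = 1 \<longrightarrow> energy t R h h' \<le> energy t R g g'"
    and "H10 R v v'"
  shows "\<exists>q'. H1 1 R (\<lambda>r. v r / h r) q' \<and>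
           phi t R h \<alpha> \<beta> \<gamma> v v' = (LBINT r=1..R.
              (\<alpha> * (q' r)\<^sup>2 * (h r)\<^sup>2 + (\<beta> - 6 * \<alpha>) / r\<^sup>2 * (v r)\<^sup>2 + \<alpha> * \<gamma> * (v r)\<^sup>2) * r\<^sup>2)"
proof -
  interpret energy_minimizer t R h h'
    using assms(2-6) by unfold_locales auto
  obtain p z where cp: "continuous_on {1..R} p"
    and dh: "\<And>x. x \<in> {1..R} \<Longrightarrow> (h has_real_derivative p x) (at x within {1..R})"
    and zeq: "\<And>x. x \<in> {1..R} \<Longrightarrow> z x = p x * x\<^sup>2"
    and dz: "\<And>x. x \<in> {1..R} \<Longrightarrow> (z has_real_derivative euler_lagrange_rhs t x (h x)) (at x within {1..R})"
    by (rule regular_representative) blast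
  have h0: "\<And>x. x \<in> {1..R} \<Longrightarrow> h x \<noteq> 0" using positive[OF assms(1)] by force
  have v: "H1 1 R v v'" "v 1 = 0" "v R = 0" using assms(7) unfolding H10_def by auto
  have cF: "continuous_on {1..R} (\<lambda>r. fh t (h r))" unfolding fh_def by (intro continuous_intros continuous_on_h)
  show ?thesis
  proof (intro exI conjI)
    show "H1 1 R (\<lambda>r. v r / h r) (\<lambda>r. v' r / h r - v r * p r / (h r)\<^sup>2)"
      by (rule H1_divide[OF R_ge_1 v(1) cp dh h0])
    show "phi t R h \<alpha> \<beta> \<gamma> v v' = (LBINT r=1..R. (\<alpha> * (v' r / h r - v r * p r / (h r)\<^sup>2)\<^sup>2 * (h r)\<^sup>2
        + (\<beta> - 6 * \<alpha>) / r\<^sup>2 * (v r)\<^sup>2 + \<alpha> * \<gamma> * (v r)\<^sup>2) * r\<^sup>2)"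
      using ground_state_substitution[OF R_ge_1 h0 cp cF dh zeq dz[unfolded euler_lagrange_rhs_def] v]
      unfolding phi_def one_ereal_def interval_integral_Icc[OF R_ge_1] .
  qed
qed

end
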